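(* Let $d \ge 1$, let $\mathcal{X}$ be a normed space (e.g. $\mathbb{R}^{w\times h\times c}$), and let $G:\mathbb{R}^d\to\mathcal{X}$ be a fixed (pre-trained generator) function. Fix constants $L \ge 0$, $\epsilon>0$ and $\epsilon'>\epsilon$. For each $n\ge 1$, let $\mathbf{z}^{(1)},\dots,\mathbf{z}^{(n)}$ be i.i.d. samples from the standard Gaussian $\mathcal{N}(0, I_d)$, and let $\mathbf{z}\sim\mathcal{N}(0,I_d)$ be independent of them. Let $I_n:\mathcal{X}\to\mathbb{R}^d$ be an inverter function (which may depend on $\mathbf{z}^{(1)},\dots,\mathbf{z}^{(n)}$ but not on $\mathbf{z}$) such that the composite $I_n\circ G:\mathbb{R}^d\to\mathbb{R}^d$ is $L$-Lipschitz and $$\|I_n(G(\mathbf{z}^{(i)}))-\mathbf{z}^{(i)}\|<\epsilon \quad \text{for all } i\in\{1,\dots,n\}.$$ Then $$\Pr\big(\|I_n(G(\mathbf{z}))-\mathbf{z}\|<\epsilon'\big)=1-o(1)\quad\text{as } n\to\infty,$$ where the probability is over $(\mathbf{z}^{(1)},\dots,\mathbf{z}^{(n)},\mathbf{z})$. That is, with high probability $I_n$ approximately inverts $G$ on a fresh latent sample.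
   Context: Norms on $\mathbb{R}^d$ are Euclidean. The Lipschitz constant $L$ is a fixed constant not depending on $n$. $\mathcal{N}(0,I_d)$ denotes the standard $d$-dimensional Gaussian distribution. *)

theory Defs
  imports "HOL-Probability.Probability"
begin

definition std_gaussian :: "(real ^ 'd) measure" where
  "std_gaussian = distr (PiM (UNIV :: 'd set) (\<lambda>_. density lborel std_normal_density))
                        borel (\<lambda>f. \<chi> i. f i)"

text \<open>Joint law of n i.i.d. samples (indexed 0..n-1) and an independent fresh sample.\<close>
definition sample_space :: "nat \<Rightarrow> ((nat \<Rightarrow> real ^ 'd) \<times> (real ^ 'd)) measure" where
  "sample_space n = PiM {..<n} (\<lambda>_. std_gaussian) \<Otimes>\<^sub>M std_gaussian"

end

theory Submission
  imports Defs
begin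

text \<open>Put \<open>\<delta> = (\<epsilon>' - \<epsilon>) / (L + 1)\<close>. If the fresh sample \<open>z\<close> lies within \<open>\<delta>\<close> of some
  training sample \<open>z\<^sub>i\<close>, the Lipschitz bound and the fit at \<open>z\<^sub>i\<close> give an inversion error
  below \<open>\<epsilon> + (L + 1) \<delta> = \<epsilon>'\<close>. Conditionally on \<open>z\<close>, the probability that all \<open>n\<close> independent
  samples miss the ball \<open>B(z, \<delta>)\<close> is \<open>(1 - \<mu>(B(z, \<delta>)))\<^sup>n\<close>; the Gaussian charges every ball,
  so this tends to \<open>0\<close> pointwise, and by dominated convergence also after integrating over \<open>z\<close>.\<close>

lemma measurable_measure_ball:
  fixes M :: "'a::{metric_space, second_countable_topology} measure"
  assumes "prob_space M" and sets_M: "sets M = sets borel"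
  shows "(\<lambda>z. measure M (ball z \<delta>)) \<in> borel_measurable M"
proof -
  interpret prob_space M by fact
  have space_M: "space M = UNIV"
    using sets_eq_imp_space_eq[OF sets_M] by simp
  have [measurable]: "fst \<in> measurable (M \<Otimes>\<^sub>M M) borel" "snd \<in> measurable (M \<Otimes>\<^sub>M M) borel"
    using measurable_fst[of M M] measurable_snd[of M M]
    by (simp_all add: measurable_cong_sets[OF refl sets_M])
  have "{x \<in> space (M \<Otimes>\<^sub>M M). snd x \<in> ball (fst x) \<delta>} \<in> sets (M \<Otimes>\<^sub>M M)"
    unfolding mem_ball by measurable
  then have "(\<lambda>z. emeasure M (ball z \<delta>)) \<in> borel_measurable M"
    by (intro measurable_emeasure) (auto simp: space_M)
  then show ?thesis
    unfolding measure_def by measurable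
qed

lemma measure_far_from_samples:
  fixes M :: "'a::{metric_space, second_countable_topology} measure" and n :: nat and \<delta> :: real
  assumes "prob_space M" and sets_M: "sets M = sets borel"
  defines "far \<equiv> {x \<in> space (PiM {..<n} (\<lambda>_. M) \<Otimes>\<^sub>M M). \<forall>i<n. \<delta> \<le> dist (fst x i) (snd x)}"
  shows "far \<in> sets (PiM {..<n} (\<lambda>_. M) \<Otimes>\<^sub>M M)"
    and "measure (PiM {..<n} (\<lambda>_. M) \<Otimes>\<^sub>M M) far = (\<integral>z. (1 - measure M (ball z \<delta>)) ^ n \<partial>M)"
proof -
  let ?P = "PiM {..<n} (\<lambda>_. M)"
  interpret M: prob_space M by fact
  interpret P: product_prob_space "\<lambda>_. M" "{..<n}" ..
  interpret P: finite_product_sigma_finite "\<lambda>_. M" "{..<n}"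
    by unfold_locales simp
  interpret PM: pair_sigma_finite ?P M ..
  have space_M: "space M = UNIV"
    using sets_eq_imp_space_eq[OF sets_M] by simp
  have [measurable]: "(\<lambda>x. fst x i) \<in> borel_measurable (?P \<Otimes>\<^sub>M M)" if "i < n" for i
  proof -
    have "(\<lambda>f. f i) \<in> measurable ?P M"
      using that by (intro measurable_component_singleton) simp
    then show ?thesis
      by (simp add: measurable_cong_sets[OF refl sets_M] measurable_compose[OF measurable_fst])
  qed
  have [measurable]: "snd \<in> borel_measurable (?P \<Otimes>\<^sub>M M)"
    using measurable_snd[of ?P M] by (simp add: measurable_cong_sets[OF refl sets_M])
  show far_sets: "far \<in> sets (?P \<Otimes>\<^sub>M M)"
    unfolding far_def by measurable
  define q where "q z = measure M (ball z \<delta>)" for z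
  have q_le_1: "0 \<le> 1 - q z" "1 - q z \<le> 1" for z
    by (simp_all add: q_def)
  have [measurable]: "q \<in> borel_measurable M"
    unfolding q_def by (rule measurable_measure_ball[OF assms(1) sets_M])
  have slice: "(\<lambda>x. (x, z)) -` far = PiE {..<n} (\<lambda>_. space M - ball z \<delta>)" for z
  proof (rule set_eqI)
    fix zs :: "nat \<Rightarrow> 'a"
    have "zs \<in> (\<lambda>x. (x, z)) -` far \<longleftrightarrow> zs \<in> PiE {..<n} (\<lambda>_. UNIV) \<and> (\<forall>i<n. \<delta> \<le> dist (zs i) z)"
      by (simp add: far_def space_pair_measure space_PiM space_M)
    also have "\<dots> \<longleftrightarrow> zs \<in> PiE {..<n} (\<lambda>_. space M - ball z \<delta>)"
      by (simp add: PiE_iff space_M dist_commute not_less) blast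
    finally show "zs \<in> (\<lambda>x. (x, z)) -` far \<longleftrightarrow> zs \<in> PiE {..<n} (\<lambda>_. space M - ball z \<delta>)" .
  qed
  have "emeasure ?P ((\<lambda>x. (x, z)) -` far) = ennreal ((1 - q z) ^ n)" for z
  proof -
    have "emeasure ?P ((\<lambda>x. (x, z)) -` far) = (\<Prod>i<n. emeasure M (space M - ball z \<delta>))"
      unfolding slice by (rule P.measure_times) (auto simp: sets_M space_M)
    also have "\<dots> = ennreal ((1 - q z) ^ n)"
      using M.prob_compl[of "ball z \<delta>"]
      by (simp add: M.emeasure_eq_measure sets_M space_M q_def prod_ennreal ennreal_power)
    finally show ?thesis .
  qed
  then have "emeasure (?P \<Otimes>\<^sub>M M) far = (\<integral>\<^sup>+z. ennreal ((1 - q z) ^ n) \<partial>M)"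
    using far_sets by (simp add: PM.emeasure_pair_measure_alt2)
  also have "\<dots> = ennreal (\<integral>z. (1 - q z) ^ n \<partial>M)"
    using q_le_1 by (intro nn_integral_eq_integral M.integrable_const_bound[where B=1])
      (auto simp: power_le_one)
  finally show "measure (?P \<Otimes>\<^sub>M M) far = (\<integral>z. (1 - measure M (ball z \<delta>)) ^ n \<partial>M)"
    using q_le_1 by (simp add: measure_def q_def integral_nonneg_AE)
qed

lemma far_from_samples_tendsto_0:
  fixes M :: "'a::{metric_space, second_countable_topology} measure" and \<delta> :: real
  assumes "prob_space M" and "sets M = sets borel"
    and ball_nonzero: "\<And>z. emeasure M (ball z \<delta>) \<noteq> 0"
  shows "(\<lambda>n. measure (PiM {..<n} (\<lambda>_. M) \<Otimes>\<^sub>M M)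
           {x \<in> space (PiM {..<n} (\<lambda>_. M) \<Otimes>\<^sub>M M). \<forall>i<n. \<delta> \<le> dist (fst x i) (snd x)})
         \<longlonglongrightarrow> 0"
proof -
  interpret M: prob_space M by fact
  define q where "q z = measure M (ball z \<delta>)" for z
  have q: "0 < q z" "q z \<le> 1" for z
    using ball_nonzero[of z] by (simp_all add: q_def M.emeasure_eq_measure zero_less_measure_iff)
  have "(\<lambda>n. \<integral>z. (1 - q z) ^ n \<partial>M) \<longlonglongrightarrow> (\<integral>z. 0 \<partial>M)"
  proof (rule integral_dominated_convergence[where w="\<lambda>_. 1"])
    show "(\<lambda>z. (1 - q z) ^ n) \<in> borel_measurable M" for n
      using measurable_measure_ball[OF assms(1,2)] unfolding q_def by measurable
    show "AE z in M. (\<lambda>n. (1 - q z) ^ n) \<longlonglongrightarrow> 0"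
      using q by (intro AE_I2 LIMSEQ_realpow_zero) (auto simp: less_imp_le)
    show "AE z in M. norm ((1 - q z) ^ n) \<le> 1" for n
      using q by (intro AE_I2) (auto simp: power_le_one less_imp_le)
  qed simp_all
  then show ?thesis
    by (simp add: measure_far_from_samples(2)[OF assms(1,2)] q_def)
qed

lemma tendsto_measure_1_if_cover:
  assumes "\<And>n. prob_space (M n)"
    and "\<forall>\<^sub>F n in sequentially.
      A n \<in> sets (M n) \<and> C n \<in> sets (M n) \<and> space (M n) \<subseteq> A n \<union> C n"
    and "(\<lambda>n. measure (M n) (C n)) \<longlonglongrightarrow> 0"
  shows "(\<lambda>n. measure (M n) (A n)) \<longlonglongrightarrow> 1"
proof (rule tendsto_sandwich)
  show "\<forall>\<^sub>F n in sequentially. 1 - measure (M n) (C n) \<le> measure (M n) (A n)"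
    using assms(2)
  proof eventually_elim
    fix n assume cover: "A n \<in> sets (M n) \<and> C n \<in> sets (M n) \<and> space (M n) \<subseteq> A n \<union> C n"
    interpret prob_space "M n" by (fact assms(1))
    have "1 \<le> measure (M n) (A n \<union> C n)"
      using cover by (metis prob_space finite_measure_mono sets.Un)
    also have "\<dots> \<le> measure (M n) (A n) + measure (M n) (C n)"
      using cover by (intro measure_Un_le) auto
    finally show "1 - measure (M n) (C n) \<le> measure (M n) (A n)"
      by simp
  qed
  show "\<forall>\<^sub>F n in sequentially. measure (M n) (A n) \<le> 1"
    by (simp add: prob_space.prob_le_1[OF assms(1)])
  show "(\<lambda>n. 1 - measure (M n) (C n)) \<longlonglongrightarrow> 1"
    using tendsto_diff[OF tendsto_const[of 1] assms(3)] by simp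
qed simp

lemma lipschitz_self_map_error_near_point:
  fixes f :: "'a::real_normed_vector \<Rightarrow> 'a"
  assumes "L-lipschitz_on UNIV f" and "L \<ge> 0"
    and "norm (f y - y) < \<epsilon>" and "dist y z < \<delta>"
  shows "norm (f z - z) < \<epsilon> + (L + 1) * \<delta>"
proof -
  have "norm (f z - f y) \<le> L * dist y z"
    using lipschitz_onD[OF assms(1), of z y] by (simp add: dist_norm norm_minus_commute)
  also have "\<dots> \<le> L * \<delta>"
    using assms(2,4) by (simp add: mult_left_mono)
  finally have "norm (f z - f y) \<le> L * \<delta>" .
  moreover have "norm (y - z) < \<delta>"
    using assms(4) by (simp add: dist_norm)
  moreover have "norm (f z - z) \<le> norm (f z - f y) + norm (f y - y) + norm (y - z)"
    using norm_triangle_ineq[of "f z - f y" "f y - y"] norm_triangle_ineq[of "f z - y" "y - z"]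
    by simp
  ultimately show ?thesis
    using assms(3) by (simp add: algebra_simps)
qed

lemma emeasure_density_nonzero:
  fixes f :: "'a \<Rightarrow> real"
  assumes f: "f \<in> borel_measurable M" and pos: "\<And>x. f x > 0"
    and A: "A \<in> sets M" "emeasure M A \<noteq> 0"
  shows "emeasure (density M f) A \<noteq> 0"
proof
  assume "emeasure (density M f) A = 0"
  then have "A \<in> null_sets (density M f)"
    using A(1) by (intro null_setsI) auto
  then have "AE x in M. x \<in> A \<longrightarrow> ennreal (f x) = 0"
    using f by (subst (asm) null_sets_density_iff) auto
  then have "AE x in M. x \<notin> A"
    by eventually_elim (metis pos ennreal_eq_0_iff not_less)
  then show False
    using A by (simp add: AE_iff_measurable[OF _ refl] Int_def[symmetric])
qed

lemma measurable_vec_lambda_PiM: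
  fixes M :: "real measure"
  assumes sets_M: "sets M = sets borel"
  shows "(\<lambda>f. \<chi> i. f i) \<in> measurable (PiM (UNIV :: 'd::finite set) (\<lambda>_. M)) (borel :: (real ^ 'd) measure)"
proof -
  have "(\<lambda>f. (\<chi> i. f i) \<bullet> axis j 1) \<in> borel_measurable (PiM (UNIV :: 'd set) (\<lambda>_. M))" for j
  proof -
    have "(\<lambda>f. f j) \<in> measurable (PiM (UNIV :: 'd set) (\<lambda>_. M)) M"
      by (rule measurable_component_singleton) simp
    then show ?thesis
      by (simp add: cart_eq_inner_axis[symmetric] measurable_cong_sets[OF refl sets_M])
  qed
  then show ?thesis
    by (subst borel_measurable_euclidean_space) (auto simp: Basis_vec_def)
qed

lemma std_gaussian_eq_distr:
  "std_gaussian = distr (PiM UNIV (\<lambda>_. std_normal_distribution)) borel (\<lambda>f. \<chi> i. f i)"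
  by (simp add: std_gaussian_def)

lemma prob_space_std_gaussian: "prob_space (std_gaussian :: (real ^ 'd::finite) measure)"
proof -
  interpret prob_space "PiM (UNIV :: 'd set) (\<lambda>_. std_normal_distribution)"
    by (intro prob_space_PiM prob_space_normal_density) simp
  show ?thesis
    unfolding std_gaussian_eq_distr by (intro prob_space_distr measurable_vec_lambda_PiM) simp
qed

lemma sets_std_gaussian [simp]: "sets std_gaussian = sets borel"
  by (simp add: std_gaussian_def)

lemma emeasure_std_gaussian_ball_nonzero:
  fixes z :: "real ^ 'd::finite"
  assumes "\<delta> > 0"
  shows "emeasure std_gaussian (ball z \<delta>) \<noteq> 0"
proof -
  let ?vec = "\<lambda>f. \<chi> i. f i"
  define r where "r = \<delta> / real CARD('d)"
  have r: "r > 0"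
    using assms by (simp add: r_def)
  let ?box = "PiE (UNIV :: 'd set) (\<lambda>i. {z$i - r <..< z$i + r})"
  interpret product_sigma_finite "\<lambda>_::'d. std_normal_distribution"
    by (simp add: product_sigma_finite_def prob_space_imp_sigma_finite prob_space_normal_density)
  have vec[measurable]:
      "?vec \<in> measurable (PiM UNIV (\<lambda>_. std_normal_distribution)) (borel :: (real ^ 'd) measure)"
    by (rule measurable_vec_lambda_PiM) simp
  have "emeasure std_normal_distribution {a<..<b} \<noteq> 0" if "a < b" for a b
    using that by (intro emeasure_density_nonzero normal_density_pos) auto
  then have "emeasure (PiM UNIV (\<lambda>_. std_normal_distribution)) ?box \<noteq> 0"
    using r by (subst emeasure_PiM) auto
  moreover have "?box \<subseteq> ?vec -` ball z \<delta> \<inter> space (PiM UNIV (\<lambda>_. std_normal_distribution))"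
  proof
    fix f assume f: "f \<in> ?box"
    have "dist z (?vec f) \<le> (\<Sum>i\<in>UNIV. \<bar>(?vec f - z) $ i\<bar>)"
      using norm_le_l1_cart[of "?vec f - z"] by (simp add: dist_norm norm_minus_commute)
    also have "\<dots> < (\<Sum>i\<in>(UNIV :: 'd set). r)"
      using f by (intro sum_strict_mono) (auto simp: PiE_iff abs_less_iff algebra_simps)
    also have "\<dots> = \<delta>"
      by (simp add: r_def)
    finally show "f \<in> ?vec -` ball z \<delta> \<inter> space (PiM UNIV (\<lambda>_. std_normal_distribution))"
      by (simp add: space_PiM)
  qed
  then have "emeasure (PiM UNIV (\<lambda>_. std_normal_distribution)) ?box
      \<le> emeasure std_gaussian (ball z \<delta>)"
    unfolding std_gaussian_eq_distr
    by (subst emeasure_distr[OF vec]) (auto intro!: emeasure_mono)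
  ultimately show ?thesis
    by (auto simp: zero_less_iff_neq_zero[symmetric] intro: order.strict_trans2)
qed

lemma prob_space_sample_space:
  "prob_space (sample_space n :: ((nat \<Rightarrow> real ^ 'd::finite) \<times> _) measure)"
  unfolding sample_space_def by (intro prob_space_pair prob_space_PiM prob_space_std_gaussian)

lemma measurable_snd_sample_space [measurable]:
  "snd \<in> borel_measurable (sample_space n :: ((nat \<Rightarrow> real ^ 'd::finite) \<times> _) measure)"
  using measurable_snd[of "PiM {..<n} (\<lambda>_. std_gaussian)" std_gaussian]
  by (simp add: sample_space_def measurable_cong_sets[OF refl sets_std_gaussian])

theorem theorem1:
  fixes G :: "real ^ 'd \<Rightarrow> 'x :: real_normed_vector"
    and Inv :: "nat \<Rightarrow> (nat \<Rightarrow> real ^ 'd) \<Rightarrow> 'x \<Rightarrow> real ^ 'd"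
    and L \<epsilon> \<epsilon>' :: real
  assumes L: "L \<ge> 0" and eps: "\<epsilon> > 0" and eps': "\<epsilon>' > \<epsilon>"
    and meas: "\<And>n. n \<ge> 1 \<Longrightarrow>
       (\<lambda>(zs, z). Inv n zs (G z)) \<in> borel_measurable (sample_space n)"
    and lip: "\<And>n zs. n \<ge> 1 \<Longrightarrow> zs \<in> space (PiM {..<n} (\<lambda>_. std_gaussian)) \<Longrightarrow>
       L-lipschitz_on UNIV (Inv n zs \<circ> G)"
    and fit: "\<And>n zs i. n \<ge> 1 \<Longrightarrow> zs \<in> space (PiM {..<n} (\<lambda>_. std_gaussian)) \<Longrightarrow>
       i < n \<Longrightarrow> norm (Inv n zs (G (zs i)) - zs i) < \<epsilon>"
  shows "(\<lambda>n. measure (sample_space n)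
            {(zs, z) \<in> space (sample_space n). norm (Inv n zs (G z) - z) < \<epsilon>'})
         \<longlonglongrightarrow> 1"
proof -
  define \<delta> where "\<delta> = (\<epsilon>' - \<epsilon>) / (L + 1)"
  have \<delta>: "\<delta> > 0" "\<epsilon> + (L + 1) * \<delta> = \<epsilon>'"
    using L eps' by (simp_all add: \<delta>_def)
  define good where
    "good n = {x \<in> space (sample_space n). norm (Inv n (fst x) (G (snd x)) - snd x) < \<epsilon>'}" for n
  define far where
    "far n = {x \<in> space (sample_space n). \<forall>i<n. \<delta> \<le> dist (fst x i) (snd x :: real ^ 'd)}" for n
  have "(\<lambda>n. measure (sample_space n) (good n)) \<longlonglongrightarrow> 1"
  proof (rule tendsto_measure_1_if_cover)
    show "prob_space (sample_space n)" for n
      by (rule prob_space_sample_space)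
    show "(\<lambda>n. measure (sample_space n) (far n)) \<longlonglongrightarrow> 0"
      unfolding far_def sample_space_def
      by (intro far_from_samples_tendsto_0 prob_space_std_gaussian sets_std_gaussian
          emeasure_std_gaussian_ball_nonzero \<delta>)
    show "\<forall>\<^sub>F n in sequentially.
        good n \<in> sets (sample_space n) \<and> far n \<in> sets (sample_space n) \<and>
        space (sample_space n) \<subseteq> good n \<union> far n"
    proof (rule eventually_sequentiallyI[of 1], intro conjI)
      fix n :: nat assume n: "n \<ge> 1"
      have "(\<lambda>x. Inv n (fst x) (G (snd x))) \<in> borel_measurable (sample_space n)"
        using meas[OF n] by (simp add: case_prod_beta')
      then show "good n \<in> sets (sample_space n)"
        unfolding good_def by measurable
      show "far n \<in> sets (sample_space n)"
        unfolding far_def sample_space_def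
        by (intro measure_far_from_samples(1) prob_space_std_gaussian sets_std_gaussian)
      show "space (sample_space n) \<subseteq> good n \<union> far n"
      proof clarify
        fix zs z assume x: "(zs, z) \<in> space (sample_space n)" and "(zs, z) \<notin> far n"
        then obtain i where i: "i < n" and "dist (zs i) z < \<delta>"
          by (auto simp: far_def not_le)
        moreover have zs: "zs \<in> space (PiM {..<n} (\<lambda>_. std_gaussian))"
          using x by (simp add: sample_space_def space_pair_measure)
        ultimately have "norm ((Inv n zs \<circ> G) z - z) < \<epsilon> + (L + 1) * \<delta>"
          using L lip[OF n zs] fit[OF n zs i]
          by (intro lipschitz_self_map_error_near_point[where y = "zs i"]) auto
        then show "(zs, z) \<in> good n"
          using x \<delta>(2) by (simp add: good_def)
      qed
    qed
  qed
  then show ?thesis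
    by (simp add: good_def case_prod_beta')
qed

end
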